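(* (1) The map $\rho$ (resp. $\eta$, $\tau$) equals the composition of the maps $\rho_a^b$ (resp. $\eta_a^b$, $\tau_a^b$) taken along any linear extension of the coordinatewise partial order on $[m]\times[n]$ (i.e. for any ordering $(a_1,b_1),\dots,(a_{mn},b_{mn})$ of $[m]\times[n]$ in which $(a,b)$ precedes $(a',b')$ whenever $a\le a'$, $b\le b'$, $(a,b)\ne(a',b')$, we have $\rho=\rho_{a_{mn}}^{b_{mn}}\circ\dots\circ\rho_{a_1}^{b_1}$, and similarly for $\eta,\tau$). (2) $\rho=\tau\circ\eta$.
   Context: For $\mathbf{x}=(x_a^b)\in\mathrm{Mat}_{m\times n}(\mathbb{C}^* )$ define $\mathrm{gMax}_a^b(\mathbf{x})=\frac{x_a^{b-1}x_{a-1}^b}{x_a^{b-1}+x_{a-1}^b}$ if $a,b>1$; $x_1^{b-1}$ if $a=1<b$; $x_{a-1}^1$ if $b=1<a$; $1$ if $a=b=1$. Define $\mathrm{gMin}_a^b(\mathbf{x})=x_{a+1}^b+x_a^{b+1}$ if $a<m,b<n$; $x_m^{b+1}$ if $a=m,b<n$; $x_{a+1}^n$ if $a<m,b=n$; $1$ if $a=m,b=n$. The rational maps $\eta_a^b,T_a^b$ change only the entry $x_a^b$: $\eta_a^b:x_a^b\mapsto x_a^b\,\mathrm{gMax}_a^b(\mathbf{x})$, $T_a^b:x_a^b\mapsto\frac{1}{x_a^b}\mathrm{gMax}_a^b(\mathbf{x})\mathrm{gMin}_a^b(\mathbf{x})$. Let $\tau_a^b=T_1^{b-a+1}\circ\dots\circ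 T_{a-2}^{b-2}\circ T_{a-1}^{b-1}$ if $a\le b$ and $\tau_a^b=T_{a-b+1}^1\circ\dots\circ T_{a-2}^{b-2}\circ T_{a-1}^{b-1}$ if $a\ge b$ (the identity if $a=1$ or $b=1$), and $\rho_a^b=\tau_a^b\circ\eta_a^b$. Define $\rho=(\rho_m^n\circ\dots\circ\rho_m^1)\circ\dots\circ(\rho_1^n\circ\dots\circ\rho_1^1)$, and $\eta,\tau$ the same way with $\rho_a^b$ replaced by $\eta_a^b$, resp. $\tau_a^b$. *)

theory Defs
  imports "HOL-Analysis.Analysis"
begin

text \<open>Matrices x = (x_a^b) are represented as functions  x :: nat => nat => complex,
  with x a b the entry x_a^b; only indices 1 <= a <= m, 1 <= b <= n are relevant.
  Division is the totalized HOL division; equality of rational maps is therefore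
  expressed as agreement on a dense open set (see rat_map_eq).\<close>

type_synonym cmat = "nat \<Rightarrow> nat \<Rightarrow> complex"

definition upd_entry :: "cmat \<Rightarrow> nat \<Rightarrow> nat \<Rightarrow> complex \<Rightarrow> cmat" where
  "upd_entry x a b v = x(a := (x a)(b := v))"

definition gMax :: "cmat \<Rightarrow> nat \<Rightarrow> nat \<Rightarrow> complex" where
  "gMax x a b =
     (if 1 < a \<and> 1 < b then x a (b-1) * x (a-1) b / (x a (b-1) + x (a-1) b)
      else if a = 1 \<and> 1 < b then x 1 (b-1)
      else if b = 1 \<and> 1 < a then x (a-1) 1
      else 1)"

definition gMin :: "nat \<Rightarrow> nat \<Rightarrow> cmat \<Rightarrow> nat \<Rightarrow> nat \<Rightarrow> complex" where
  "gMin m n x a b =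
     (if a < m \<and> b < n then x (a+1) b + x a (b+1)
      else if a = m \<and> b < n then x m (b+1)
      else if a < m \<and> b = n then x (a+1) n
      else 1)"

definition eta_ab :: "nat \<Rightarrow> nat \<Rightarrow> cmat \<Rightarrow> cmat" where
  "eta_ab a b x = upd_entry x a b (x a b * gMax x a b)"

definition T_ab :: "nat \<Rightarrow> nat \<Rightarrow> nat \<Rightarrow> nat \<Rightarrow> cmat \<Rightarrow> cmat" where
  "T_ab m n a b x = upd_entry x a b (gMax x a b * gMin m n x a b / x a b)"

text \<open>tau_a^b = T_{a-k0}^{b-k0} o ... o T_{a-1}^{b-1} with k0 = min a b - 1:
  T_{a-1}^{b-1} is applied first, then T_{a-2}^{b-2}, etc.  (identity if a=1 or b=1).\<close>
definition tau_ab :: "nat \<Rightarrow> nat \<Rightarrow> nat \<Rightarrow> nat \<Rightarrow> cmat \<Rightarrow> cmat" where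
  "tau_ab m n a b x = fold (\<lambda>k y. T_ab m n (a-k) (b-k) y) [1..<min a b] x"

definition rho_ab :: "nat \<Rightarrow> nat \<Rightarrow> nat \<Rightarrow> nat \<Rightarrow> cmat \<Rightarrow> cmat" where
  "rho_ab m n a b = tau_ab m n a b \<circ> eta_ab a b"

definition comp_along :: "(nat \<Rightarrow> nat \<Rightarrow> cmat \<Rightarrow> cmat) \<Rightarrow> (nat \<times> nat) list \<Rightarrow> cmat \<Rightarrow> cmat" where
  "comp_along F L x = fold (\<lambda>(a,b) y. F a b y) L x"

text \<open>Row-by-row order (1,1),...,(1,n),(2,1),...,(m,n), giving
  (F_m^n o ... o F_m^1) o ... o (F_1^n o ... o F_1^1).\<close>
definition std_order :: "nat \<Rightarrow> nat \<Rightarrow> (nat \<times> nat) list" where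
  "std_order m n = concat (map (\<lambda>a. map (\<lambda>b. (a,b)) [1..<n+1]) [1..<m+1])"

definition rho_map :: "nat \<Rightarrow> nat \<Rightarrow> cmat \<Rightarrow> cmat" where
  "rho_map m n = comp_along (rho_ab m n) (std_order m n)"

definition eta_map :: "nat \<Rightarrow> nat \<Rightarrow> cmat \<Rightarrow> cmat" where
  "eta_map m n = comp_along eta_ab (std_order m n)"

definition tau_map :: "nat \<Rightarrow> nat \<Rightarrow> cmat \<Rightarrow> cmat" where
  "tau_map m n = comp_along (tau_ab m n) (std_order m n)"

definition linear_extension :: "nat \<Rightarrow> nat \<Rightarrow> (nat \<times> nat) list \<Rightarrow> bool" where
  "linear_extension m n L \<longleftrightarrow>
     distinct L \<and> set L = {1..m} \<times> {1..n} \<and>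
     (\<forall>i<length L. \<forall>j<length L.
        fst (L!i) \<le> fst (L!j) \<and> snd (L!i) \<le> snd (L!j) \<and> L!i \<noteq> L!j \<longrightarrow> i < j)"

definition rat_map_eq :: "nat \<Rightarrow> nat \<Rightarrow> (cmat \<Rightarrow> cmat) \<Rightarrow> (cmat \<Rightarrow> cmat) \<Rightarrow> bool" where
  "rat_map_eq m n f g \<longleftrightarrow>
     (\<exists>U. open U \<and> closure U = UNIV \<and>
        (\<forall>x\<in>U. \<forall>a\<in>{1..m}. \<forall>b\<in>{1..n}. f x a b = g x a b))"

end

theory Submission
  imports Defs
begin

text \<open>Each of \<open>\<eta>\<^sub>a\<^sup>b\<close>, \<open>T\<^sub>a\<^sup>b\<close> changes only the entry \<open>(a, b)\<close>, and the new value
  depends only on \<open>(a, b)\<close> and its four nearest neighbours. Hence \<open>\<eta>\<^sub>a\<^sup>b\<close>, \<open>\<tau>\<^sub>a\<^sup>b\<close>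
  and \<open>\<rho>\<^sub>a\<^sup>b\<close> change only entries on the diagonal \<open>b - a\<close> and read only the three
  diagonals around it, so maps attached to cells whose diagonals are at distance at least 2
  commute. Two cells ordered differently by two linear extensions are incomparable, hence lie on
  such diagonals, and one linear extension is turned into another by swapping such pairs.
  For (2), \<open>\<tau>\<^sub>a\<^sup>b\<close> reads and writes only cells preceding \<open>(a, b)\<close> in row-major
  order, so it commutes with \<open>\<eta>\<^sub>c\<^sup>e\<close> for every later \<open>(c, e)\<close>, and all the
  \<open>\<eta>\<close>'s can be moved to the front. All identities hold for the total maps, so the rational
  maps agree everywhere.\<close>

definition agree_on :: "('a \<times> 'b) set \<Rightarrow> ('a \<Rightarrow> 'b \<Rightarrow> 'c) \<Rightarrow> ('a \<Rightarrow> 'b \<Rightarrow> 'c) \<Rightarrow> bool" where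
  "agree_on S x y \<longleftrightarrow> (\<forall>a b. (a, b) \<in> S \<longrightarrow> x a b = y a b)"

definition local_update ::
    "('a \<times> 'b) set \<Rightarrow> ('a \<times> 'b) set \<Rightarrow> (('a \<Rightarrow> 'b \<Rightarrow> 'c) \<Rightarrow> 'a \<Rightarrow> 'b \<Rightarrow> 'c) \<Rightarrow> bool" where
  "local_update W R f \<longleftrightarrow>
     (\<forall>x. agree_on (- W) (f x) x) \<and> (\<forall>x y. agree_on R x y \<longrightarrow> agree_on W (f x) (f y))"

lemma local_update_agree_outside:
  "local_update W R f \<Longrightarrow> W \<inter> S = {} \<Longrightarrow> agree_on S (f x) x"
  unfolding local_update_def agree_on_def by blast

lemma local_update_comp:
  assumes f: "local_update W R f" and g: "local_update W R g"
  shows "local_update W R (g \<circ> f)"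
proof -
  have "agree_on R (f x) (f y)" if "agree_on R x y" for x y
  proof -
    have "agree_on (R \<inter> W) (f x) (f y)"
      using f that unfolding local_update_def agree_on_def by blast
    moreover have "agree_on (R - W) (f x) (f y)"
      using f that unfolding local_update_def agree_on_def by auto
    ultimately show ?thesis unfolding agree_on_def by blast
  qed
  moreover have "agree_on (- W) (g (f x)) x" for x
    using f g unfolding local_update_def agree_on_def by auto
  ultimately show ?thesis
    using g unfolding local_update_def by auto
qed

lemma local_update_fold:
  assumes "W \<subseteq> R" and "\<And>k. k \<in> set ks \<Longrightarrow> local_update W R (g k)"
  shows "local_update W R (fold g ks)"
  using assms(2)
proof (induction ks)
  case Nil
  show ?case using \<open>W \<subseteq> R\<close> by (auto simp: local_update_def agree_on_def)
next
  case (Cons k ks)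
  then have "local_update W R (fold g ks \<circ> g k)"
    by (intro local_update_comp) auto
  then show ?case by (simp add: comp_def)
qed

lemma local_update_mono:
  assumes f: "local_update W R f" and "W \<subseteq> W'" "R \<subseteq> R'" "W' \<subseteq> R'"
  shows "local_update W' R' f"
  unfolding local_update_def
proof (intro conjI allI impI)
  fix x
  show "agree_on (- W') (f x) x"
    using f \<open>W \<subseteq> W'\<close> unfolding local_update_def agree_on_def by blast
next
  fix x y :: "'a \<Rightarrow> 'b \<Rightarrow> 'c" assume xy: "agree_on R' x y"
  then have "agree_on W (f x) (f y)"
    using f \<open>R \<subseteq> R'\<close> unfolding local_update_def agree_on_def by blast
  moreover have "agree_on (- W) (f x) x" "agree_on (- W) (f y) y"
    using f unfolding local_update_def by blast+
  ultimately show "agree_on W' (f x) (f y)"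
    using xy \<open>W' \<subseteq> R'\<close> unfolding agree_on_def by (metis Compl_iff subsetD)
qed

lemma local_update_commute:
  assumes f: "local_update W1 R1 f" and g: "local_update W2 R2 g"
    and "W1 \<inter> R2 = {}" "W2 \<inter> R1 = {}" "W1 \<inter> W2 = {}"
  shows "f \<circ> g = g \<circ> f"
proof (intro ext)
  fix x a b
  have "agree_on R1 (g x) x" "agree_on R2 (f x) x"
    using assms by (blast intro: local_update_agree_outside)+
  then have fg: "agree_on W1 (f (g x)) (f x)" and gf: "agree_on W2 (g (f x)) (g x)"
    using f g unfolding local_update_def by blast+
  have f_out: "agree_on (- W1) (f y) y" and g_out: "agree_on (- W2) (g y) y" for y
    using f g unfolding local_update_def by blast+
  consider "(a, b) \<in> W1" | "(a, b) \<in> W2" | "(a, b) \<notin> W1" "(a, b) \<notin> W2" by blast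
  then show "(f \<circ> g) x a b = (g \<circ> f) x a b"
  proof cases
    case 1
    then have "(a, b) \<notin> W2" using \<open>W1 \<inter> W2 = {}\<close> by blast
    then show ?thesis using 1 fg g_out[of "f x"] unfolding agree_on_def by simp
  next
    case 2
    then have "(a, b) \<notin> W1" using \<open>W1 \<inter> W2 = {}\<close> by blast
    then show ?thesis using 2 gf f_out[of "g x"] unfolding agree_on_def by simp
  next
    case 3
    then show ?thesis using f_out g_out unfolding agree_on_def by simp
  qed
qed

fun precedes :: "'a list \<Rightarrow> 'a \<Rightarrow> 'a \<Rightarrow> bool" where
  "precedes [] p q \<longleftrightarrow> False"
| "precedes (x # xs) p q \<longleftrightarrow> (x = p \<and> q \<in> set xs) \<or> precedes xs p q"

lemma precedes_nth:
  "precedes xs p q \<Longrightarrow> \<exists>i j. i < j \<and> j < length xs \<and> xs ! i = p \<and> xs ! j = q"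
proof (induction xs)
  case Nil
  then show ?case by simp
next
  case (Cons x xs)
  show ?case
  proof (cases "x = p \<and> q \<in> set xs")
    case True
    then obtain j where "j < length xs" "xs ! j = q" by (meson in_set_conv_nth)
    then show ?thesis using True by (intro exI[of _ 0] exI[of _ "Suc j"]) auto
  next
    case False
    then obtain i j where "i < j" "j < length xs" "xs ! i = p" "xs ! j = q" using Cons by auto
    then show ?thesis by (intro exI[of _ "Suc i"] exI[of _ "Suc j"]) auto
  qed
qed

lemma precedes_sorted_wrt: "sorted_wrt R xs \<Longrightarrow> precedes xs p q \<Longrightarrow> R p q"
  by (induction xs) auto

lemma precedes_mem_append_Cons: "q \<in> set ys \<Longrightarrow> precedes (ys @ x # zs) q x"
  by (induction ys) auto

lemma precedes_append_Cons: "precedes (ys @ zs) p q \<Longrightarrow> precedes (ys @ x # zs) p q"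
  by (induction ys) auto

lemma fold_reorder:
  assumes "distinct xs" "distinct ys" "set xs = set ys"
    and "\<And>p q. precedes xs p q \<Longrightarrow> precedes ys q p \<Longrightarrow> f p \<circ> f q = f q \<circ> f p"
  shows "fold f xs = fold f ys"
  using assms
proof (induction xs arbitrary: ys)
  case Nil
  then show ?case by simp
next
  case (Cons x xs)
  then obtain us vs where ys: "ys = us @ x # vs" by (metis list.set_intros(1) split_list)
  have x_notin: "x \<notin> set us" "x \<notin> set vs" using Cons.prems(2) ys by auto
  have "fold f xs = fold f (us @ vs)"
  proof (rule Cons.IH)
    show "distinct xs" "distinct (us @ vs)" "set xs = set (us @ vs)"
      using Cons.prems(1-3) ys x_notin by auto
    show "f p \<circ> f q = f q \<circ> f p" if "precedes xs p q" "precedes (us @ vs) q p" for p q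
      by (rule Cons.prems(4)) (use that ys precedes_append_Cons in auto)
  qed
  moreover have "f x \<circ> f u = f u \<circ> f x" if "u \<in> set us" for u
  proof -
    have "u \<in> set xs" using that Cons.prems(3) ys x_notin by auto
    show ?thesis
      by (rule Cons.prems(4)) (use \<open>u \<in> set xs\<close> that ys precedes_mem_append_Cons in auto)
  qed
  then have "f x \<circ> fold f us = fold f us \<circ> f x"
    by (rule fold_commute)
  ultimately show ?case using ys by (simp add: comp_assoc)
qed

lemma fold_comp_split:
  assumes "\<And>p q. precedes xs p q \<Longrightarrow> g p \<circ> f q = f q \<circ> g p"
  shows "fold (\<lambda>p. g p \<circ> f p) xs = fold g xs \<circ> fold f xs"
  using assms
proof (induction xs)
  case Nil
  then show ?case by simp
next
  case (Cons x xs)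
  have commute: "g x \<circ> fold f xs = fold f xs \<circ> g x"
    by (intro fold_commute Cons.prems) simp
  have IH: "fold (\<lambda>p. g p \<circ> f p) xs = fold g xs \<circ> fold f xs"
    by (rule Cons.IH, rule Cons.prems) simp
  have "fold (\<lambda>p. g p \<circ> f p) (x # xs) = fold g xs \<circ> (fold f xs \<circ> g x) \<circ> f x"
    by (simp only: fold_Cons IH comp_assoc)
  also have "\<dots> = fold g (x # xs) \<circ> fold f (x # xs)"
    by (simp only: fold_Cons comp_assoc flip: commute)
  finally show ?case .
qed

definition neighbours :: "nat \<Rightarrow> nat \<Rightarrow> (nat \<times> nat) set" where
  "neighbours a b = {(a, b), (a, b - 1), (a - 1, b), (a + 1, b), (a, b + 1)}"

lemma agree_on_neighboursD: "agree_on (neighbours a b) x y \<Longrightarrow> x a b = y a b"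
  by (simp add: agree_on_def neighbours_def)

lemma gMax_cong: "agree_on (neighbours a b) x y \<Longrightarrow> gMax x a b = gMax y a b"
  unfolding gMax_def agree_on_def neighbours_def by auto

lemma gMin_cong: "agree_on (neighbours a b) x y \<Longrightarrow> gMin m n x a b = gMin m n y a b"
  unfolding gMin_def agree_on_def neighbours_def by auto

lemma local_update_upd_entry:
  assumes "\<And>x y. agree_on R x y \<Longrightarrow> v x = v y"
  shows "local_update {(a, b)} R (\<lambda>x. upd_entry x a b (v x))"
  using assms unfolding local_update_def agree_on_def upd_entry_def by auto

lemma local_update_eta_ab: "local_update {(a, b)} (neighbours a b) (eta_ab a b)"
  unfolding eta_ab_def[abs_def]
  by (intro local_update_upd_entry) (metis agree_on_neighboursD gMax_cong)

lemma local_update_T_ab: "local_update {(a, b)} (neighbours a b) (T_ab m n a b)"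
  unfolding T_ab_def[abs_def]
  by (intro local_update_upd_entry) (metis agree_on_neighboursD gMax_cong gMin_cong)

definition diagonal :: "nat \<times> nat \<Rightarrow> int" where
  "diagonal = (\<lambda>(a, b). int b - int a)"

definition row_major_less :: "nat \<times> nat \<Rightarrow> nat \<times> nat \<Rightarrow> bool" where
  "row_major_less = (\<lambda>(a, b) (c, e). a < c \<or> a = c \<and> b < e)"

lemma local_update_tau_ab:
  "local_update (diagonal -` {diagonal (a, b)} \<inter> {p. row_major_less p (a, b)})
     (diagonal -` {diagonal (a, b) - 1 .. diagonal (a, b) + 1} \<inter> {p. row_major_less p (a, b)})
     (tau_ab m n a b)"
  unfolding tau_ab_def[abs_def]
proof (rule local_update_fold)
  fix k assume "k \<in> set [1..<min a b]"
  then show "local_update (diagonal -` {diagonal (a, b)} \<inter> {p. row_major_less p (a, b)})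
     (diagonal -` {diagonal (a, b) - 1 .. diagonal (a, b) + 1} \<inter> {p. row_major_less p (a, b)})
     (T_ab m n (a - k) (b - k))"
    by (intro local_update_mono[OF local_update_T_ab])
      (auto simp: diagonal_def neighbours_def row_major_less_def)
qed auto

definition local_to_diagonal :: "int \<Rightarrow> (cmat \<Rightarrow> cmat) \<Rightarrow> bool" where
  "local_to_diagonal d f \<longleftrightarrow> local_update (diagonal -` {d}) (diagonal -` {d - 1 .. d + 1}) f"

lemma local_to_diagonal_commute:
  assumes "local_to_diagonal d f" "local_to_diagonal d' g" "2 \<le> \<bar>d - d'\<bar>"
  shows "f \<circ> g = g \<circ> f"
  by (rule local_update_commute[OF assms(1,2)[unfolded local_to_diagonal_def]])
    (use assms(3) in auto)

lemma local_to_diagonal_eta_ab: "local_to_diagonal (diagonal (a, b)) (eta_ab a b)"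
  unfolding local_to_diagonal_def
  by (rule local_update_mono[OF local_update_eta_ab]) (auto simp: diagonal_def neighbours_def)

lemma local_to_diagonal_tau_ab: "local_to_diagonal (diagonal (a, b)) (tau_ab m n a b)"
  unfolding local_to_diagonal_def by (rule local_update_mono[OF local_update_tau_ab]) auto

lemma local_to_diagonal_rho_ab: "local_to_diagonal (diagonal (a, b)) (rho_ab m n a b)"
  unfolding rho_ab_def
  using local_to_diagonal_eta_ab local_to_diagonal_tau_ab
  unfolding local_to_diagonal_def by (rule local_update_comp)

lemma incomparable_diagonal_distance:
  fixes p q :: "nat \<times> nat"
  assumes "\<not> p \<le> q" "\<not> q \<le> p"
  shows "2 \<le> \<bar>diagonal p - diagonal q\<bar>"
  using assms by (auto simp: less_eq_prod_def diagonal_def split: prod.splits)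

lemma linear_extension_precedes:
  assumes "linear_extension m n L" "precedes L p q"
  shows "\<not> q \<le> p"
proof
  assume "q \<le> p"
  obtain i j where ij: "i < j" "j < length L" "L ! i = p" "L ! j = q"
    using precedes_nth[OF assms(2)] by blast
  have "distinct L" using assms(1) by (simp add: linear_extension_def)
  then have "L ! j \<noteq> L ! i"
    using ij nth_eq_iff_index_eq[of L j i] by simp
  then have "j < i"
    using assms(1) ij \<open>q \<le> p\<close> by (auto simp: linear_extension_def less_eq_prod_def)
  then show False using ij by simp
qed

lemma comp_along_linear_extensions_eq:
  assumes L1: "linear_extension m n L1" and L2: "linear_extension m n L2"
    and local: "\<And>a b. local_to_diagonal (diagonal (a, b)) (F a b)"
  shows "comp_along F L1 = comp_along F L2"
  unfolding comp_along_def
proof (rule fold_reorder)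
  show "distinct L1" "distinct L2" "set L1 = set L2"
    using L1 L2 by (auto simp: linear_extension_def)
  fix p q assume "precedes L1 p q" "precedes L2 q p"
  then have distance: "2 \<le> \<bar>diagonal p - diagonal q\<bar>"
    using L1 L2 by (intro incomparable_diagonal_distance) (auto dest: linear_extension_precedes)
  obtain a b c e where "p = (a, b)" "q = (c, e)" by fastforce
  then show "(\<lambda>(a, b). F a b) p \<circ> (\<lambda>(a, b). F a b) q = (\<lambda>(a, b). F a b) q \<circ> (\<lambda>(a, b). F a b) p"
    using local_to_diagonal_commute[OF local local, of a b c e] distance by simp
qed

lemma set_std_order: "set (std_order m n) = {1..m} \<times> {1..n}"
  unfolding std_order_def by (auto simp: image_iff)

lemma sorted_wrt_std_order: "sorted_wrt row_major_less (std_order m n)"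
proof (induction m)
  case 0
  then show ?case by (simp add: std_order_def)
next
  case (Suc m)
  have "std_order (Suc m) n = std_order m n @ map (Pair (Suc m)) [1..<n + 1]"
    by (simp add: std_order_def)
  moreover have "sorted_wrt row_major_less (map (Pair (Suc m)) [1..<n + 1])"
    by (simp add: sorted_wrt_map sorted_wrt_upt row_major_less_def del: upt_Suc)
  ultimately show ?case
    using Suc by (auto simp: sorted_wrt_append set_std_order row_major_less_def simp del: upt_Suc)
qed

lemma linear_extension_std_order: "linear_extension m n (std_order m n)"
  unfolding linear_extension_def
proof (intro conjI allI impI)
  have "distinct xs" if "sorted_wrt row_major_less xs" for xs
    using that by (induction xs) (auto simp: row_major_less_def)
  then show "distinct (std_order m n)" using sorted_wrt_std_order by blast
  show "set (std_order m n) = {1..m} \<times> {1..n}" by (rule set_std_order)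
  fix i j
  assume "i < length (std_order m n)" "j < length (std_order m n)"
    and le: "fst (std_order m n ! i) \<le> fst (std_order m n ! j) \<and>
      snd (std_order m n ! i) \<le> snd (std_order m n ! j) \<and> std_order m n ! i \<noteq> std_order m n ! j"
  moreover have "\<not> j < i"
    using sorted_wrt_nth_less[OF sorted_wrt_std_order, of j i m n] \<open>i < length (std_order m n)\<close> le
    by (auto simp: row_major_less_def split: prod.splits)
  ultimately show "i < j" by (metis linorder_neqE_nat)
qed

lemma tau_ab_eta_ab_commute:
  assumes "row_major_less (a, b) (c, e)"
  shows "tau_ab m n a b \<circ> eta_ab c e = eta_ab c e \<circ> tau_ab m n a b"
  by (rule local_update_commute[OF local_update_tau_ab local_update_eta_ab])
    (use assms in \<open>auto simp: neighbours_def diagonal_def row_major_less_def\<close>)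

lemma rho_map_eq_tau_map_comp_eta_map: "rho_map m n = tau_map m n \<circ> eta_map m n"
proof -
  have "rho_map m n = fold (\<lambda>p. case_prod (tau_ab m n) p \<circ> case_prod eta_ab p) (std_order m n)"
    unfolding rho_map_def comp_along_def rho_ab_def by (simp add: case_prod_beta')
  also have "\<dots> = tau_map m n \<circ> eta_map m n"
    unfolding tau_map_def eta_map_def comp_along_def
  proof (rule fold_comp_split)
    fix p q assume "precedes (std_order m n) p q"
    then have "row_major_less p q"
      by (rule precedes_sorted_wrt[OF sorted_wrt_std_order])
    then show "case_prod (tau_ab m n) p \<circ> case_prod eta_ab q = case_prod eta_ab q \<circ> case_prod (tau_ab m n) p"
      by (auto split: prod.splits intro: tau_ab_eta_ab_commute)
  qed
  finally show ?thesis .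
qed

lemma rat_map_eq_refl: "rat_map_eq m n f f"
  unfolding rat_map_eq_def by (intro exI[of _ UNIV]) simp

theorem lemma4p4:
  fixes m n :: nat
  shows "(\<forall>L. linear_extension m n L \<longrightarrow>
            rat_map_eq m n (rho_map m n) (comp_along (rho_ab m n) L) \<and>
            rat_map_eq m n (eta_map m n) (comp_along eta_ab L) \<and>
            rat_map_eq m n (tau_map m n) (comp_along (tau_ab m n) L))
         \<and> rat_map_eq m n (rho_map m n) (tau_map m n \<circ> eta_map m n)"
proof (intro conjI allI impI)
  fix L assume L: "linear_extension m n L"
  note reorder = comp_along_linear_extensions_eq[OF linear_extension_std_order L]
  show "rat_map_eq m n (rho_map m n) (comp_along (rho_ab m n) L)"
    unfolding rho_map_def reorder[OF local_to_diagonal_rho_ab] by (rule rat_map_eq_refl)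
  show "rat_map_eq m n (eta_map m n) (comp_along eta_ab L)"
    unfolding eta_map_def reorder[OF local_to_diagonal_eta_ab] by (rule rat_map_eq_refl)
  show "rat_map_eq m n (tau_map m n) (comp_along (tau_ab m n) L)"
    unfolding tau_map_def reorder[OF local_to_diagonal_tau_ab] by (rule rat_map_eq_refl)
next
  show "rat_map_eq m n (rho_map m n) (tau_map m n \<circ> eta_map m n)"
    unfolding rho_map_eq_tau_map_comp_eta_map by (rule rat_map_eq_refl)
qed

end
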